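(* Let $n\ge 2$, $q=e^{2\pi i/6}$, and in $Q_n$ define $s_i=\frac{-1}{2q}(1+u_i+v_i+u_iv_i)$ for $1\le i\le n-1$. Then the $s_i$ satisfy $s_is_{i+1}s_i=s_{i+1}s_is_{i+1}$ for $1\le i\le n-2$, $s_is_j=s_js_i$ for $|i-j|\ge 2$, and $(s_i-q)(s_i+1)=0$ for all $i$. Moreover $s_1^{-1}=-\frac{q}{2}(1-u_1-v_1-u_1v_1)$ and $s_1^{-1}u_1s_1=u_1v_1$, $s_1^{-1}v_1s_1=u_1$, $s_1^{-1}u_2s_1=u_2v_1$, $s_1^{-1}v_2s_1=-u_1v_1v_2$.
   Context: $Q_n$ is the $\mathbb{C}$-algebra with generators $u_1,v_1,\dots,u_{n-1},v_{n-1}$ and relations: (G1) $u_i^2=v_i^2=-1$; (G2) $[u_i,v_j]=-1$ if $|i-j|\le 1$; (G3) $[u_i,v_j]=1$ if $|i-j|\ge 2$; (G4) $[u_i,u_j]=[v_i,v_j]=1$, where $[a,b]=aba^{-1}b^{-1}$. *)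

theory Defs
  imports Complex_Main
begin

text \<open>A complex algebra structure on a unital ring: a unital ring homomorphism
  from the complex numbers into the centre of the ring (scalar multiplication
  c x is emb c * x).\<close>
definition complex_alg_emb :: "(complex \<Rightarrow> 'a::ring_1) \<Rightarrow> bool" where
  "complex_alg_emb emb \<longleftrightarrow>
     emb 1 = 1 \<and> (\<forall>a b. emb (a + b) = emb a + emb b) \<and>
     (\<forall>a b. emb (a * b) = emb a * emb b) \<and> (\<forall>c x. emb c * x = x * emb c)"

definition ring_inv :: "'a::ring_1 \<Rightarrow> 'a" where
  "ring_inv a = (THE b. a * b = 1 \<and> b * a = 1)"

definition commutator :: "'a::ring_1 \<Rightarrow> 'a \<Rightarrow> 'a" where
  "commutator a b = a * b * ring_inv a * ring_inv b"

text \<open>The defining relations (G1)-(G4) of Q_n for generators u_i, v_i, 1 <= i <= n-1.\<close>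
definition Q_relations :: "nat \<Rightarrow> (nat \<Rightarrow> 'a::ring_1) \<Rightarrow> (nat \<Rightarrow> 'a) \<Rightarrow> bool" where
  "Q_relations n u v \<longleftrightarrow>
     (\<forall>i\<in>{1..n-1}. u i ^ 2 = -1 \<and> v i ^ 2 = -1) \<and>
     (\<forall>i\<in>{1..n-1}. \<forall>j\<in>{1..n-1}.
        (\<bar>int i - int j\<bar> \<le> 1 \<longrightarrow> commutator (u i) (v j) = -1) \<and>
        (\<bar>int i - int j\<bar> \<ge> 2 \<longrightarrow> commutator (u i) (v j) = 1) \<and>
        commutator (u i) (u j) = 1 \<and> commutator (v i) (v j) = 1)"

definition qq :: complex where
  "qq = exp (2 * pi * \<i> / 6)"

definition s_gen :: "(complex \<Rightarrow> 'a::ring_1) \<Rightarrow> (nat \<Rightarrow> 'a) \<Rightarrow> (nat \<Rightarrow> 'a) \<Rightarrow> nat \<Rightarrow> 'a" where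
  "s_gen emb u v i = emb (-1 / (2 * qq)) * (1 + u i + v i + u i * v i)"

end

theory Submission
  imports Defs
begin

(* By (G1)-(G4) each pair (u_i, v_i) is an "anticommuting pair": both
   elements square to -1 and they anticommute, like the quaternion units i and j.  The
   generator s_i is the scalar -1/(2q) times P(u_i, v_i), where P(a, c) = 1 + a + c + ac,
   so every claim reduces to an identity between such elements valid in any unital ring:
     P(a,c)^2 = 2 P(a,c) - 4,   P(a,c) M(a,c) = M(a,c) P(a,c) = 4  (M = 1 - a - c - ac),
     M a P = 4 ac,   M c P = 4 a,
   and the braid resp. commutation relation between P(a,c) and P(b,d) when the two pairs
   interact as the generators with neighbouring resp. distant indices do.
   The scalar q = exp(2 pi i/6) satisfies q^2 = q - 1; this turns P^2 = 2P - 4 into the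
   quadratic relation (s_i - q)(s_i + 1) = 0 and P M = 4 into s_i^-1 = -(q/2) M(u_i, v_i). *)

section \<open>Two-sided inverses and commutators\<close>

lemma ring_inv_unique:
  fixes a b :: "'a::ring_1"
  assumes "a * b = 1" "b * a = 1"
  shows "ring_inv a = b"
  unfolding ring_inv_def
proof (rule the_equality)
  show "a * b = 1 \<and> b * a = 1" using assms by simp
  fix b' assume b': "a * b' = 1 \<and> b' * a = 1"
  have "b' = b' * (a * b)" using assms by simp
  also have "\<dots> = (b' * a) * b" by (simp add: mult.assoc)
  also have "\<dots> = b" using b' by simp
  finally show "b' = b" .
qed

lemma ring_inv_square_minus_one:
  fixes x :: "'a::ring_1"
  assumes "x * x = -1"
  shows "ring_inv x = - x"
  by (rule ring_inv_unique) (simp_all add: assms)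

lemma commutator_minus_one_anticommute:
  fixes x y :: "'a::ring_1"
  assumes xx: "x * x = -1" and yy: "y * y = -1" and c: "commutator x y = -1"
  shows "y * x = - (x * y)"
proof -
  have xyxy: "x * y * x * y = -1"
    using c by (simp add: commutator_def ring_inv_square_minus_one xx yy)
  have "y * x = - (x * y * x * y) * (y * x)" by (simp add: xyxy)
  also have "\<dots> = - (x * y * x * (y * y) * x)" by (simp add: mult.assoc)
  also have "\<dots> = x * y * (x * x)" by (simp add: yy mult.assoc)
  also have "\<dots> = - (x * y)" by (simp add: xx)
  finally show ?thesis .
qed

lemma commutator_one_commute:
  fixes x y :: "'a::ring_1"
  assumes xx: "x * x = -1" and yy: "y * y = -1" and c: "commutator x y = 1"
  shows "y * x = x * y"
proof -
  have xyxy: "x * y * x * y = 1"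
    using c by (simp add: commutator_def ring_inv_square_minus_one xx yy)
  have "y * x = (x * y * x * y) * (y * x)" by (simp add: xyxy)
  also have "\<dots> = x * y * x * (y * y) * x" by (simp add: mult.assoc)
  also have "\<dots> = - (x * y * (x * x))" by (simp add: yy mult.assoc)
  also have "\<dots> = x * y" by (simp add: xx)
  finally show ?thesis .
qed

section \<open>Elements of quaternion type\<close>

definition anticomm_pair :: "'a::ring_1 \<Rightarrow> 'a \<Rightarrow> bool" where
  "anticomm_pair a c \<longleftrightarrow> a * a = -1 \<and> c * c = -1 \<and> c * a = - (a * c)"

text \<open>The element \<open>1 + a + c + ac\<close> (a multiple of \<open>s_i\<close>) and its
  "conjugate" \<open>1 - a - c - ac\<close> (a multiple of its inverse).\<close>
definition quat_plus :: "'a::ring_1 \<Rightarrow> 'a \<Rightarrow> 'a" where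
  "quat_plus a c = 1 + a + c + a * c"

definition quat_minus :: "'a::ring_1 \<Rightarrow> 'a \<Rightarrow> 'a" where
  "quat_minus a c = 1 - a - c - a * c"

text \<open>Lets identities proved as sums of four equal terms be stated with the numeral 4.\<close>
lemma four_times: "(4::'a::ring_1) * x = x + x + x + x"
proof -
  have "(4::'a) = 1 + 1 + 1 + 1" by simp
  then show ?thesis by (simp only: distrib_right mult_1_left)
qed

text \<open>The relations of an anticommuting pair, also in right-nested form so that the
  simplifier can normalise products of arbitrary length.\<close>
lemma anticomm_pair_rewrites:
  assumes "anticomm_pair a c"
  shows "a * a = -1" "c * c = -1" "c * a = - (a * c)"
    "a * (a * z) = - z" "c * (c * z) = - z" "c * (a * z) = - (a * (c * z))"
  using assms unfolding anticomm_pair_def by (simp_all add: mult.assoc[symmetric])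

lemma quat_plus_square:
  assumes "anticomm_pair a c"
  shows "quat_plus a c * quat_plus a c = 2 * quat_plus a c - 4"
  unfolding mult_2 quat_plus_def
  by (simp add: algebra_simps anticomm_pair_rewrites[OF assms])

lemma quat_plus_minus:
  assumes "anticomm_pair a c"
  shows "quat_plus a c * quat_minus a c = 4" "quat_minus a c * quat_plus a c = 4"
  unfolding quat_plus_def quat_minus_def
  by (simp_all add: algebra_simps anticomm_pair_rewrites[OF assms])

lemma quat_conj_own:
  assumes "anticomm_pair a c"
  shows "quat_minus a c * a * quat_plus a c = 4 * (a * c)"
    "quat_minus a c * c * quat_plus a c = 4 * a"
  unfolding four_times quat_plus_def quat_minus_def
  by (simp_all add: algebra_simps anticomm_pair_rewrites[OF assms])

text \<open>The following three lemmas concern two anticommuting pairs \<open>(a, c)\<close> and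
  \<open>(b, d)\<close>; the hypotheses on mixed products are those satisfied by
  \<open>(u_i, v_i)\<close> and \<open>(u_j, v_j)\<close> in \<open>Q_n\<close> for neighbouring
  resp. distant indices.\<close>

lemma quat_braid:
  assumes ac: "anticomm_pair a c" and bd: "anticomm_pair b d"
    and ba: "b * a = a * b" and dc: "d * c = c * d"
    and da: "d * a = - (a * d)" and cb: "c * b = - (b * c)"
  shows "quat_plus a c * quat_plus b d * quat_plus a c
       = quat_plus b d * quat_plus a c * quat_plus b d"
proof -
  have nested: "b * (a * z) = a * (b * z)" "d * (c * z) = c * (d * z)"
    "d * (a * z) = - (a * (d * z))" "c * (b * z) = - (b * (c * z))" for z
    by (simp_all add: mult.assoc[symmetric] ba dc da cb)
  show ?thesis
    unfolding quat_plus_def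
    by (simp add: algebra_simps anticomm_pair_rewrites[OF ac] anticomm_pair_rewrites[OF bd]
        ba dc da cb nested)
qed

lemma quat_conj_neighbour:
  assumes ac: "anticomm_pair a c" and bd: "anticomm_pair b d"
    and ba: "b * a = a * b" and dc: "d * c = c * d"
    and da: "d * a = - (a * d)" and cb: "c * b = - (b * c)"
  shows "quat_minus a c * b * quat_plus a c = 4 * (b * c)"
    "quat_minus a c * d * quat_plus a c = 4 * (- (a * c * d))"
proof -
  have nested: "b * (a * z) = a * (b * z)" "d * (c * z) = c * (d * z)"
    "d * (a * z) = - (a * (d * z))" "c * (b * z) = - (b * (c * z))" for z
    by (simp_all add: mult.assoc[symmetric] ba dc da cb)
  show "quat_minus a c * b * quat_plus a c = 4 * (b * c)"
    "quat_minus a c * d * quat_plus a c = 4 * (- (a * c * d))"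
    unfolding four_times quat_plus_def quat_minus_def
    by (simp_all add: algebra_simps anticomm_pair_rewrites[OF ac] anticomm_pair_rewrites[OF bd]
        ba dc da cb nested)
qed

lemma quat_far_commute:
  assumes ac: "anticomm_pair a c" and bd: "anticomm_pair b d"
    and ba: "b * a = a * b" and dc: "d * c = c * d"
    and da: "d * a = a * d" and cb: "c * b = b * c"
  shows "quat_plus a c * quat_plus b d = quat_plus b d * quat_plus a c"
proof -
  have nested: "b * (a * z) = a * (b * z)" "d * (c * z) = c * (d * z)"
    "d * (a * z) = a * (d * z)" "c * (b * z) = b * (c * z)" for z
    by (simp_all add: mult.assoc[symmetric] ba dc da cb)
  show ?thesis
    unfolding quat_plus_def
    by (simp add: algebra_simps anticomm_pair_rewrites[OF ac] anticomm_pair_rewrites[OF bd]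
        ba dc da cb nested)
qed

section \<open>The relations of \<open>Q_n\<close> in multiplicative form\<close>

lemma Q_relations_squares:
  assumes "Q_relations n u v" "i \<in> {1..n-1}"
  shows "u i * u i = -1" "v i * v i = -1"
  using assms unfolding Q_relations_def by (auto simp: power2_eq_square)

lemma Q_relations_anticomm_pair:
  assumes "Q_relations n u v" "i \<in> {1..n-1}"
  shows "anticomm_pair (u i) (v i)"
proof -
  have "commutator (u i) (v i) = -1"
    using assms unfolding Q_relations_def by auto
  then show ?thesis
    unfolding anticomm_pair_def
    using Q_relations_squares[OF assms] commutator_minus_one_anticommute by blast
qed

lemma Q_relations_neighbours:
  assumes Q: "Q_relations n u v" and i: "i \<in> {1..n-1}" and j: "j \<in> {1..n-1}"
    and near: "\<bar>int i - int j\<bar> \<le> 1"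
  shows "u j * u i = u i * u j" "v j * v i = v i * v j"
    "v j * u i = - (u i * v j)" "v i * u j = - (u j * v i)"
proof -
  have "commutator (u i) (u j) = 1" "commutator (v i) (v j) = 1"
    "commutator (u i) (v j) = -1" "commutator (u j) (v i) = -1"
    using Q i j near unfolding Q_relations_def by (auto simp: abs_minus_commute)
  then show "u j * u i = u i * u j" "v j * v i = v i * v j"
    "v j * u i = - (u i * v j)" "v i * u j = - (u j * v i)"
    using Q_relations_squares[OF Q i] Q_relations_squares[OF Q j]
    by (simp_all add: commutator_one_commute commutator_minus_one_anticommute)
qed

lemma Q_relations_distant:
  assumes Q: "Q_relations n u v" and i: "i \<in> {1..n-1}" and j: "j \<in> {1..n-1}"
    and far: "\<bar>int i - int j\<bar> \<ge> 2"
  shows "u j * u i = u i * u j" "v j * v i = v i * v j"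
    "v j * u i = u i * v j" "v i * u j = u j * v i"
proof -
  have "commutator (u i) (u j) = 1" "commutator (v i) (v j) = 1"
    "commutator (u i) (v j) = 1" "commutator (u j) (v i) = 1"
    using Q i j far unfolding Q_relations_def by (auto simp: abs_minus_commute)
  then show "u j * u i = u i * u j" "v j * v i = v i * v j"
    "v j * u i = u i * v j" "v i * u j = u j * v i"
    using Q_relations_squares[OF Q i] Q_relations_squares[OF Q j]
    by (simp_all add: commutator_one_commute)
qed

section \<open>Complex scalars\<close>

lemma complex_alg_emb_hom:
  assumes "complex_alg_emb emb"
  shows "emb 1 = 1" "emb (a + b) = emb a + emb b" "emb (a * b) = emb a * emb b"
    "emb c * x = x * emb c" "emb 0 = 0" "emb (- a) = - emb a"
    "emb (a - b) = emb a - emb b" "emb (numeral k) = numeral k"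
proof -
  show one: "emb 1 = 1" and add: "\<And>a b. emb (a + b) = emb a + emb b"
    and "emb (a * b) = emb a * emb b" and "emb c * x = x * emb c"
    using assms unfolding complex_alg_emb_def by blast+
  have "emb 0 = emb 0 + emb 0" using add[of 0 0] by simp
  then show zero: "emb 0 = 0" by simp
  have neg: "emb (- a) = - emb a" for a
    using add[of "- a" a] zero by (simp add: eq_neg_iff_add_eq_0)
  then show "emb (- a) = - emb a" .
  show "emb (a - b) = emb a - emb b"
    using add[of a "- b"] neg[of b] by simp
  have "emb (of_nat m) = of_nat m" for m
    by (induction m) (simp_all add: zero one add)
  then show "emb (numeral k) = numeral k"
    using of_nat_numeral by metis
qed

lemma scaled_mult:
  assumes "complex_alg_emb emb"
  shows "emb a * x * (emb b * y) = emb (a * b) * (x * y)"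
proof -
  note hom = complex_alg_emb_hom[OF assms]
  have "emb a * x * (emb b * y) = emb a * (x * emb b) * y" by (simp only: mult.assoc)
  also have "\<dots> = (emb a * emb b) * (x * y)" by (simp only: hom(4)[of b x, symmetric] mult.assoc)
  also have "\<dots> = emb (a * b) * (x * y)" by (simp only: hom(3))
  finally show ?thesis .
qed

lemma scaled_cancel:
  assumes "complex_alg_emb emb" "a * b = 1"
  shows "emb a * (emb b * x) = x"
proof -
  note hom = complex_alg_emb_hom[OF assms(1)]
  have "emb a * (emb b * x) = emb (a * b) * x" by (simp only: mult.assoc[symmetric] hom(3))
  then show ?thesis by (simp only: assms(2) hom(1) mult_1_left)
qed

lemma qq_squared: "qq * qq = qq - 1"
proof -
  have "qq = cis (pi / 3)"
    unfolding qq_def cis_conv_exp by (simp add: mult.commute)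
  then have qq: "qq = Complex (1/2) (sqrt 3 / 2)"
    by (simp add: complex_eq_iff cos_60 sin_60)
  show ?thesis unfolding qq by (simp add: complex_eq_iff)
qed

lemma qq_nonzero: "qq \<noteq> 0"
  unfolding qq_def by simp

text \<open>The scalars in \<open>s_i\<close> and in its inverse, \<open>c = -1/(2q)\<close> and
  \<open>d = -q/2\<close>, satisfy \<open>2c = q - 1\<close> and \<open>cd = 1/4\<close>.\<close>
lemma s_scalar:
  "2 * (-1 / (2 * qq)) = qq - 1"
  "(- qq / 2) * (-1 / (2 * qq)) * 4 = 1" "(-1 / (2 * qq)) * (- qq / 2) * 4 = 1"
  using qq_squared qq_nonzero by (simp_all add: field_simps)

section \<open>The generators \<open>s_i\<close>\<close>

lemma s_gen_quat: "s_gen emb u v i = emb (-1 / (2 * qq)) * quat_plus (u i) (v i)"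
  unfolding s_gen_def quat_plus_def ..

text \<open>Quadratic (Hecke) relation: from \<open>P^2 = 2P - 4\<close> and \<open>q^2 = q - 1\<close>.\<close>
lemma s_gen_quadratic:
  assumes emb: "complex_alg_emb emb" and pair: "anticomm_pair (u i) (v i)"
  shows "(s_gen emb u v i - emb qq) * (s_gen emb u v i + 1) = 0"
proof -
  define c where "c = -1 / (2 * qq)"
  define P where "P = quat_plus (u i) (v i)"
  note hom = complex_alg_emb_hom[OF emb]
  have PP: "P * P = emb 2 * P - emb 4"
    unfolding P_def hom(8) by (rule quat_plus_square[OF pair])
  have c: "2 * c = qq - 1" unfolding c_def by (rule s_scalar(1))
  have "(emb c * P - emb qq) * (emb c * P + 1)
      = emb c * P * (emb c * P) + emb c * P - emb qq * (emb c * P) - emb qq"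
    by (simp add: algebra_simps)
  also have "\<dots> = emb (c * c) * (emb 2 * P - emb 4) + emb c * P - emb (qq * c) * P - emb qq"
    unfolding scaled_mult[OF emb, of c P c P] PP by (simp add: hom(3) mult.assoc)
  also have "\<dots> = emb (2 * c * c + c - qq * c) * P - emb (4 * c * c + qq)"
    by (simp add: hom(2,3,7) algebra_simps)
  also have "\<dots> = 0"
  proof -
    have "2 * c * c + c - qq * c = 0" "4 * c * c + qq = 0"
      using c qq_squared by algebra+
    then show ?thesis by (simp add: hom(5))
  qed
  finally show ?thesis
    unfolding s_gen_quat c_def P_def .
qed

text \<open>\<open>s_i^-1 = d M(u_i, v_i)\<close> with \<open>d = -q/2\<close>, since \<open>PM = MP = 4\<close> and
  \<open>cd = 1/4\<close>.\<close>
lemma s_gen_inverse: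
  assumes emb: "complex_alg_emb emb" and pair: "anticomm_pair (u i) (v i)"
  shows "ring_inv (s_gen emb u v i) = emb (- qq / 2) * quat_minus (u i) (v i)"
proof (rule ring_inv_unique)
  note hom = complex_alg_emb_hom[OF emb]
  note PM = quat_plus_minus[OF pair, folded hom(8)]
  show "s_gen emb u v i * (emb (- qq / 2) * quat_minus (u i) (v i)) = 1"
    unfolding s_gen_quat scaled_mult[OF emb] PM(1) hom(3)[symmetric] s_scalar hom(1) ..
  show "emb (- qq / 2) * quat_minus (u i) (v i) * s_gen emb u v i = 1"
    unfolding s_gen_quat scaled_mult[OF emb] PM(2)
      hom(3)[symmetric] s_scalar hom(1) ..
qed

lemma s_gen_conjugate:
  assumes emb: "complex_alg_emb emb" and pair: "anticomm_pair (u i) (v i)"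
    and conj: "quat_minus (u i) (v i) * x * quat_plus (u i) (v i) = 4 * y"
  shows "ring_inv (s_gen emb u v i) * x * s_gen emb u v i = y"
proof -
  define c where "c = -1 / (2 * qq)"
  define d where "d = - qq / 2"
  note hom = complex_alg_emb_hom[OF emb]
  have "ring_inv (s_gen emb u v i) * x * s_gen emb u v i
      = emb d * (quat_minus (u i) (v i) * x) * (emb c * quat_plus (u i) (v i))"
    unfolding s_gen_inverse[where u = u and v = v and i = i, OF emb pair]
    unfolding s_gen_quat c_def d_def by (simp only: mult.assoc)
  also have "\<dots> = emb (d * c) * (emb 4 * y)"
    unfolding scaled_mult[OF emb] conj hom(8) ..
  also have "\<dots> = y"
    by (rule scaled_cancel[OF emb]) (simp only: c_def d_def s_scalar(2))
  finally show ?thesis .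
qed

lemma s_gen_braid:
  assumes emb: "complex_alg_emb emb" and Q: "Q_relations n u v"
    and i: "i \<in> {1..n-1}" and j: "j \<in> {1..n-1}" and near: "\<bar>int i - int j\<bar> \<le> 1"
  shows "s_gen emb u v i * s_gen emb u v j * s_gen emb u v i
       = s_gen emb u v j * s_gen emb u v i * s_gen emb u v j"
  unfolding s_gen_quat scaled_mult[OF emb]
  using quat_braid[OF Q_relations_anticomm_pair[OF Q i] Q_relations_anticomm_pair[OF Q j]
      Q_relations_neighbours[OF Q i j near]]
  by simp

lemma s_gen_far_commute:
  assumes emb: "complex_alg_emb emb" and Q: "Q_relations n u v"
    and i: "i \<in> {1..n-1}" and j: "j \<in> {1..n-1}" and far: "\<bar>int i - int j\<bar> \<ge> 2"
  shows "s_gen emb u v i * s_gen emb u v j = s_gen emb u v j * s_gen emb u v i"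
  unfolding s_gen_quat scaled_mult[OF emb]
  using quat_far_commute[OF Q_relations_anticomm_pair[OF Q i] Q_relations_anticomm_pair[OF Q j]
      Q_relations_distant[OF Q i j far]]
  by (simp add: mult.commute)

theorem mainTheorem3:
  fixes emb :: "complex \<Rightarrow> 'a::ring_1"
    and u v :: "nat \<Rightarrow> 'a"
    and n :: nat
  assumes "n \<ge> 2"
    and "complex_alg_emb emb"
    and "Q_relations n u v"
  defines "s \<equiv> s_gen emb u v"
  shows "(\<forall>i\<in>{1..n-2}. s i * s (i+1) * s i = s (i+1) * s i * s (i+1))
       \<and> (\<forall>i\<in>{1..n-1}. \<forall>j\<in>{1..n-1}. \<bar>int i - int j\<bar> \<ge> 2 \<longrightarrow> s i * s j = s j * s i)
       \<and> (\<forall>i\<in>{1..n-1}. (s i - emb qq) * (s i + 1) = 0)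
       \<and> ring_inv (s 1) = emb (- qq / 2) * (1 - u 1 - v 1 - u 1 * v 1)
       \<and> ring_inv (s 1) * u 1 * s 1 = u 1 * v 1
       \<and> ring_inv (s 1) * v 1 * s 1 = u 1
       \<and> (n \<ge> 3 \<longrightarrow>
            ring_inv (s 1) * u 2 * s 1 = u 2 * v 1
          \<and> ring_inv (s 1) * v 2 * s 1 = - (u 1 * v 1 * v 2))"
proof -
  note emb = assms(2) and Q = assms(3)
  have one: "1 \<in> {1..n-1}" using assms(1) by simp
  have pair1: "anticomm_pair (u 1) (v 1)" by (rule Q_relations_anticomm_pair[OF Q one])
  note conj1 = s_gen_conjugate[OF emb, where u = u and v = v and i = 1, OF pair1]
  have braid: "s i * s (i+1) * s i = s (i+1) * s i * s (i+1)" if "i \<in> {1..n-2}" for i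
    unfolding s_def by (rule s_gen_braid[OF emb Q]) (use that in auto)
  have quadratic: "(s i - emb qq) * (s i + 1) = 0" if "i \<in> {1..n-1}" for i
    unfolding s_def by (rule s_gen_quadratic[OF emb], rule Q_relations_anticomm_pair[OF Q that])
  have own: "ring_inv (s 1) * u 1 * s 1 = u 1 * v 1" "ring_inv (s 1) * v 1 * s 1 = u 1"
    unfolding s_def using conj1 quat_conj_own[OF pair1] by blast+
  have second: "ring_inv (s 1) * u 2 * s 1 = u 2 * v 1
      \<and> ring_inv (s 1) * v 2 * s 1 = - (u 1 * v 1 * v 2)" if "n \<ge> 3"
  proof -
    have two: "2 \<in> {1..n-1}" using that by simp
    have near: "\<bar>int 1 - int 2\<bar> \<le> 1" by simp
    show ?thesis
      unfolding s_def
      using conj1 quat_conj_neighbour[OF pair1 Q_relations_anticomm_pair[OF Q two]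
          Q_relations_neighbours[OF Q one two near]]
      by blast
  qed
  show ?thesis
    using braid s_gen_far_commute[OF emb Q] quadratic
      s_gen_inverse[OF emb, where u = u and v = v and i = 1, OF pair1] own second
    unfolding s_def quat_minus_def by blast
qed

end
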